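(* Let $d\ge2$, $t\ge 0$, and let $\Phi_t:\mathbb M_d\to\mathbb M_d$, $\Phi_t(X)=\mathrm{Tr}(X)I_d-tX$. Fix $\alpha\in[1,d]$ and write $k:=\lfloor\alpha\rfloor$, $\theta:=\alpha-k\in[0,1)$. Then $$\Phi_t\in\mathsf P_\alpha\iff t\le t^\ast_\alpha:=\frac{k+\theta^2}{(k+\theta)^2},$$ and in fact $\lambda_\alpha(C_{\Phi_t})=1-t\frac{(k+\theta)^2}{k+\theta^2}$. Moreover the threshold is sharp: if $t>t^\ast_\alpha$ there exists $x\in\mathcal V_\alpha$ with $\langle x,C_{\Phi_t}x\rangle<0$; if $\alpha\in(k,k+1)$ one may take $x$ with Schmidt coefficients $\frac{1}{\sqrt{k+\theta^2}}$ ($k$ times), $\frac{\theta}{\sqrt{k+\theta^2}}$, and $0$ otherwise; if $\alpha=d$ one may take $x=\omega:=\frac1{\sqrt d}\sum_{i=1}^de_i\otimes e_i$.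
   Context: Here $n=m=d$. The Choi matrix of a linear $\Phi:\mathbb M_d\to\mathbb M_d$ is $C_\Phi=\sum_{i,j}E_{ij}\otimes\Phi(E_{ij})$ (matrix units $E_{ij}$; one has $C_{\Phi_t}=I\otimes I-td\,\omega\omega^\ast$). Schmidt coefficients $s_1(\psi)\ge\dots\ge s_d(\psi)\ge0$ of $\psi=\sum a_{ij}e_i\otimes e_j$ are the singular values of $[a_{ij}]$. For $\alpha\in[1,d]$ with $k=\lfloor\alpha\rfloor$, $\theta=\alpha-k$, $r=\lceil\alpha\rceil$, a unit vector $\psi$ is $\alpha$-admissible if $s_j(\psi)=0$ for $j\ge r+1$ and, when $\theta>0$, $s_{k+1}(\psi)\le\frac\theta k\sum_{j=1}^ks_j(\psi)$; $\mathcal V_\alpha$ is the set of these. For Hermitian $W$, $\lambda_\alpha(W):=\min\{\langle x,Wx\rangle:x\in\mathcal V_\alpha\}$. A Hermitian-preserving $\Phi$ is in $\mathsf P_\alpha$ if $\langle\psi,C_\Phi\psi\rangle\ge0$ for all $\psi\in\mathcal V_\alpha$ (equivalently $\lambda_\alpha(C_\Phi)\ge0$). *)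

theory Defs
  imports "HOL-Analysis.Analysis"
begin

text \<open>A d x d complex matrix is a function nat => nat => complex, only the
 entries with indices < d matter (indices 0..d-1 stand for 1..d).  A vector
 psi = sum a_ij e_i (x) e_j of C^d (x) C^d is represented by its coefficient matrix a.\<close>

type_synonym cmat = "nat \<Rightarrow> nat \<Rightarrow> complex"

definition unitary_mat :: "nat \<Rightarrow> cmat \<Rightarrow> bool" where
  "unitary_mat d U \<longleftrightarrow>
     (\<forall>i<d. \<forall>j<d. (\<Sum>m<d. U i m * cnj (U j m)) = (if i = j then 1 else 0))"

definition is_singular_values :: "nat \<Rightarrow> cmat \<Rightarrow> (nat \<Rightarrow> real) \<Rightarrow> bool" where
  "is_singular_values d a s \<longleftrightarrow>
     (\<forall>j. 0 \<le> s j) \<and> (\<forall>j. d \<le> j \<longrightarrow> s j = 0) \<and>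
     (\<forall>i j. i \<le> j \<longrightarrow> j < d \<longrightarrow> s j \<le> s i) \<and>
     (\<exists>U V. unitary_mat d U \<and> unitary_mat d V \<and>
        (\<forall>i<d. \<forall>p<d. a i p = (\<Sum>m<d. U i m * complex_of_real (s m) * cnj (V p m))))"

text \<open>Schmidt coefficients s_1 >= ... >= s_d of psi: schmidt d a j is s_(j+1).\<close>
definition schmidt :: "nat \<Rightarrow> cmat \<Rightarrow> nat \<Rightarrow> real" where
  "schmidt d a = (SOME s. is_singular_values d a s)"

definition unit_vec :: "nat \<Rightarrow> cmat \<Rightarrow> bool" where
  "unit_vec d a \<longleftrightarrow> (\<Sum>i<d. \<Sum>p<d. (cmod (a i p))\<^sup>2) = 1"

definition admissible :: "nat \<Rightarrow> real \<Rightarrow> cmat \<Rightarrow> bool" where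
  "admissible d \<alpha> a \<longleftrightarrow>
     (let k = nat \<lfloor>\<alpha>\<rfloor>; \<theta> = \<alpha> - real k; r = nat \<lceil>\<alpha>\<rceil> in
       unit_vec d a \<and>
       (\<forall>j. r \<le> j \<longrightarrow> schmidt d a j = 0) \<and>
       (\<theta> > 0 \<longrightarrow> schmidt d a k \<le> \<theta> / real k * (\<Sum>j<k. schmidt d a j)))"

definition V_set :: "nat \<Rightarrow> real \<Rightarrow> cmat set" where
  "V_set d \<alpha> = {a. admissible d \<alpha> a}"

text \<open>Matrix units E_ij and Choi matrix C_Phi = sum E_ij (x) Phi(E_ij); the entry of C_Phi
 in row e_i (x) e_p and column e_j (x) e_q is Phi(E_ij)_pq.\<close>
definition mat_unit :: "nat \<Rightarrow> nat \<Rightarrow> cmat" where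
  "mat_unit i j = (\<lambda>a b. if a = i \<and> b = j then 1 else 0)"

definition choi :: "(cmat \<Rightarrow> cmat) \<Rightarrow> nat \<times> nat \<Rightarrow> nat \<times> nat \<Rightarrow> complex" where
  "choi \<Phi> = (\<lambda>(i, p) (j, q). \<Phi> (mat_unit i j) p q)"

definition qform :: "nat \<Rightarrow> (nat \<times> nat \<Rightarrow> nat \<times> nat \<Rightarrow> complex) \<Rightarrow> cmat \<Rightarrow> complex" where
  "qform d W x = (\<Sum>i<d. \<Sum>p<d. \<Sum>j<d. \<Sum>q<d. cnj (x i p) * W (i, p) (j, q) * x j q)"

definition lambda_alpha :: "nat \<Rightarrow> real \<Rightarrow> (nat \<times> nat \<Rightarrow> nat \<times> nat \<Rightarrow> complex) \<Rightarrow> real" where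
  "lambda_alpha d \<alpha> W = Inf ((\<lambda>x. Re (qform d W x)) ` V_set d \<alpha>)"

definition hermitian_mat :: "nat \<Rightarrow> cmat \<Rightarrow> bool" where
  "hermitian_mat d X \<longleftrightarrow> (\<forall>i<d. \<forall>j<d. X j i = cnj (X i j))"

definition hermitian_preserving :: "nat \<Rightarrow> (cmat \<Rightarrow> cmat) \<Rightarrow> bool" where
  "hermitian_preserving d \<Phi> \<longleftrightarrow> (\<forall>X. hermitian_mat d X \<longrightarrow> hermitian_mat d (\<Phi> X))"

text \<open>The quadratic form is real for Hermitian-preserving maps (Choi matrix Hermitian).\<close>
definition in_P :: "nat \<Rightarrow> real \<Rightarrow> (cmat \<Rightarrow> cmat) \<Rightarrow> bool" where
  "in_P d \<alpha> \<Phi> \<longleftrightarrow> hermitian_preserving d \<Phi> \<and>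
     (\<forall>\<psi>\<in>V_set d \<alpha>. 0 \<le> Re (qform d (choi \<Phi>) \<psi>))"

definition mtrace :: "nat \<Rightarrow> cmat \<Rightarrow> complex" where
  "mtrace d X = (\<Sum>i<d. X i i)"

definition Phi_t :: "nat \<Rightarrow> real \<Rightarrow> cmat \<Rightarrow> cmat" where
  "Phi_t d t X = (\<lambda>i j. (if i = j then mtrace d X else 0) - complex_of_real t * X i j)"

definition omega :: "nat \<Rightarrow> cmat" where
  "omega d = (\<lambda>i j. if i = j then complex_of_real (1 / sqrt (real d)) else 0)"

end

theory Submission
  imports Defs "Jordan_Normal_Form.Spectral_Radius" "HOL-Combinatorics.List_Permutation"
begin

text \<open>For a vector with coefficient matrix \<open>a\<close>, \<open>\<langle>x, C\<^bsub>\<Phi>\<^sub>t\<^esub> x\<rangle> = \<parallel>a\<parallel>\<^sup>2 - t \<bar>Tr a\<bar>\<^sup>2\<close>, so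
  everything reduces to maximising \<open>\<bar>Tr a\<bar>\<close> over \<open>\<alpha>\<close>-admissible unit vectors.  By the singular
  value decomposition \<open>\<bar>Tr a\<bar> \<le> \<Sum> s\<^sub>j\<close> and \<open>\<Sum> s\<^sub>j\<^sup>2 = 1\<close>; Cauchy-Schwarz on the first \<open>k\<close>
  coefficients together with the admissibility constraint \<open>k s\<^sub>k\<^sub>+\<^sub>1 \<le> \<theta> (s\<^sub>1 + \<dots> + s\<^sub>k)\<close> gives
  \<open>(\<Sum> s\<^sub>j)\<^sup>2 \<le> (k + \<theta>)\<^sup>2 / (k + \<theta>\<^sup>2)\<close>.  Equality holds for the diagonal matrix with entries
  \<open>1/\<surd>(k + \<theta>\<^sup>2)\<close> (\<open>k\<close> times) and \<open>\<theta>/\<surd>(k + \<theta>\<^sup>2)\<close>, whose Schmidt coefficients are exactly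
  these entries by uniqueness of singular values.\<close>

definition cmat_mult :: "nat \<Rightarrow> cmat \<Rightarrow> cmat \<Rightarrow> cmat" where
  "cmat_mult n A B = (\<lambda>i j. \<Sum>m<n. A i m * B m j)"

definition cmat_adj :: "cmat \<Rightarrow> cmat" where
  "cmat_adj A = (\<lambda>i j. cnj (A j i))"

definition cmat_diag :: "(nat \<Rightarrow> complex) \<Rightarrow> cmat" where
  "cmat_diag s = (\<lambda>i j. if i = j then s i else 0)"

definition cmat_is_id :: "nat \<Rightarrow> cmat \<Rightarrow> bool" where
  "cmat_is_id n M \<longleftrightarrow> (\<forall>i<n. \<forall>j<n. M i j = (if i = j then 1 else 0))"

definition cmat_extend :: "nat \<Rightarrow> cmat \<Rightarrow> cmat" where
  "cmat_extend n M = (\<lambda>i j. if i < n \<and> j < n then M i j else if i = n \<and> j = n then 1 else 0)"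

definition mat_of_cmat :: "nat \<Rightarrow> cmat \<Rightarrow> complex mat" where
  "mat_of_cmat n A = mat n n (\<lambda>(i, j). A i j)"

lemma mat_of_cmat_carrier [simp]: "mat_of_cmat n A \<in> carrier_mat n n"
  by (simp add: mat_of_cmat_def)

lemma mat_of_cmat_index [simp]: "i < n \<Longrightarrow> j < n \<Longrightarrow> mat_of_cmat n A $$ (i, j) = A i j"
  by (simp add: mat_of_cmat_def)

lemma mat_of_cmat_mult: "mat_of_cmat n A * mat_of_cmat n B = mat_of_cmat n (cmat_mult n A B)"
proof (rule eq_matI)
  fix i j assume "i < dim_row (mat_of_cmat n (cmat_mult n A B))" "j < dim_col (mat_of_cmat n (cmat_mult n A B))"
  then have ij: "i < n" "j < n" by (auto simp: mat_of_cmat_def)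
  have "(mat_of_cmat n A * mat_of_cmat n B) $$ (i, j) = (\<Sum>m<n. A i m * B m j)"
    using ij by (simp add: scalar_prod_def atLeast0LessThan mat_of_cmat_def)
  then show "(mat_of_cmat n A * mat_of_cmat n B) $$ (i, j) = mat_of_cmat n (cmat_mult n A B) $$ (i, j)"
    using ij by (simp add: cmat_mult_def)
qed (auto simp: mat_of_cmat_def)

lemma mat_of_cmat_is_id: "cmat_is_id n M \<longleftrightarrow> mat_of_cmat n M = 1\<^sub>m n"
  unfolding cmat_is_id_def by (auto simp: mat_of_cmat_def mat_eq_iff)

lemma cmat_is_id_mult_commute:
  assumes "cmat_is_id n (cmat_mult n A B)"
  shows "cmat_is_id n (cmat_mult n B A)"
  using assms mat_mult_left_right_inverse[of "mat_of_cmat n A" n "mat_of_cmat n B"]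
  by (simp add: mat_of_cmat_is_id mat_of_cmat_mult [symmetric])

lemma cmat_mult_assoc: "cmat_mult n (cmat_mult n A B) C = cmat_mult n A (cmat_mult n B C)"
  unfolding cmat_mult_def
  by (auto simp: sum_distrib_left sum_distrib_right mult.assoc intro!: ext sum.swap)

lemma cmat_adj_mult: "cmat_adj (cmat_mult n A B) = cmat_mult n (cmat_adj B) (cmat_adj A)"
  unfolding cmat_mult_def cmat_adj_def by (auto simp: mult.commute intro!: ext)

lemma cmat_mult_diag: "cmat_mult n (cmat_mult n U (cmat_diag s)) V i p = (\<Sum>m<n. U i m * s m * V m p)"
  unfolding cmat_mult_def cmat_diag_def by (simp add: if_distrib if_distribR cong: if_cong)

lemma cmat_mult_id_left:
  assumes "cmat_is_id n M" "i < n" "j < n"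
  shows "cmat_mult n M B i j = B i j"
proof -
  have "cmat_mult n M B i j = (\<Sum>m<n. if m = i then B m j else 0)"
    unfolding cmat_mult_def by (rule sum.cong) (use assms in \<open>auto simp: cmat_is_id_def\<close>)
  then show ?thesis using assms by simp
qed

lemma cmat_mult_id_right:
  assumes "cmat_is_id n M" "i < n" "j < n"
  shows "cmat_mult n B M i j = B i j"
proof -
  have "cmat_mult n B M i j = (\<Sum>m<n. if m = j then B i m else 0)"
    unfolding cmat_mult_def by (rule sum.cong) (use assms in \<open>auto simp: cmat_is_id_def\<close>)
  then show ?thesis using assms by simp
qed

lemma cmat_mult_cong:
  "(\<And>i m. i < n \<Longrightarrow> m < n \<Longrightarrow> A i m = A' i m) \<Longrightarrow> (\<And>m j. m < n \<Longrightarrow> j < n \<Longrightarrow> B m j = B' m j)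
   \<Longrightarrow> i < n \<Longrightarrow> j < n \<Longrightarrow> cmat_mult n A B i j = cmat_mult n A' B' i j"
  unfolding cmat_mult_def by (auto intro!: sum.cong)

lemma cmat_has_eigenvector:
  fixes H :: cmat
  assumes "0 < n"
  shows "\<exists>e v. (\<exists>i<n. v i \<noteq> 0) \<and> (\<forall>i<n. (\<Sum>j<n. H i j * v j) = e * v i)"
proof -
  obtain e where "e \<in> spectrum (mat_of_cmat n H)"
    using spectrum_non_empty[of "mat_of_cmat n H" n] assms by auto
  then obtain v where v: "v \<in> carrier_vec n" "v \<noteq> 0\<^sub>v n" "mat_of_cmat n H *\<^sub>v v = e \<cdot>\<^sub>v v"
    unfolding spectrum_def eigenvalue_def eigenvector_def by (auto simp: mat_of_cmat_def)
  have "\<exists>i<n. v $ i \<noteq> 0"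
    using v(1,2) by (auto simp: vec_eq_iff)
  moreover have "(\<Sum>j<n. H i j * v $ j) = e * v $ i" if "i < n" for i
    using arg_cong[OF v(3), of "\<lambda>w. w $ i"] that v(1)
    by (simp add: mult_mat_vec_def scalar_prod_def atLeast0LessThan mat_of_cmat_def)
  ultimately show ?thesis by blast
qed

lemma cmat_has_left_null_vector:
  fixes A :: cmat
  assumes "\<exists>i<n. v i \<noteq> 0" "\<forall>i<n. (\<Sum>j<n. A i j * v j) = 0"
  shows "\<exists>w. (\<exists>i<n. w i \<noteq> 0) \<and> (\<forall>j<n. (\<Sum>i<n. w i * A i j) = 0)"
proof -
  have "vec n v \<noteq> 0\<^sub>v n" using assms(1) by (auto simp: vec_eq_iff)
  moreover have "mat_of_cmat n A *\<^sub>v vec n v = 0\<^sub>v n"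
    using assms(2) by (intro eq_vecI) (auto simp: mult_mat_vec_def scalar_prod_def atLeast0LessThan mat_of_cmat_def)
  ultimately have "det (mat_of_cmat n A) = 0"
    using det_0_iff_vec_prod_zero[of "mat_of_cmat n A" n] vec_carrier[of n v] mat_of_cmat_carrier by blast
  then have "det (transpose_mat (mat_of_cmat n A)) = 0" by (simp add: det_transpose[of _ n])
  then obtain w where w: "w \<in> carrier_vec n" "w \<noteq> 0\<^sub>v n" "transpose_mat (mat_of_cmat n A) *\<^sub>v w = 0\<^sub>v n"
    using det_0_iff_vec_prod_zero[of "transpose_mat (mat_of_cmat n A)" n] by auto
  have "\<exists>i<n. w $ i \<noteq> 0"
    using w(1,2) by (auto simp: vec_eq_iff)
  moreover have "(\<Sum>i<n. w $ i * A i j) = 0" if "j < n" for j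
    using arg_cong[OF w(3), of "\<lambda>u. u $ j"] that w(1)
    by (simp add: mult_mat_vec_def scalar_prod_def atLeast0LessThan mat_of_cmat_def mult.commute)
  ultimately show ?thesis by blast
qed

lemma unitary_mat_iff_mult_adj: "unitary_mat n U \<longleftrightarrow> cmat_is_id n (cmat_mult n U (cmat_adj U))"
  unfolding unitary_mat_def cmat_is_id_def cmat_mult_def cmat_adj_def by simp

lemma unitary_mat_adj_mult: "unitary_mat n U \<Longrightarrow> cmat_is_id n (cmat_mult n (cmat_adj U) U)"
  by (simp add: unitary_mat_iff_mult_adj cmat_is_id_mult_commute)

lemma unitary_mat_columns: "unitary_mat n U \<Longrightarrow> i < n \<Longrightarrow> j < n \<Longrightarrow>
    (\<Sum>m<n. cnj (U m i) * U m j) = (if i = j then 1 else 0)"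
  using unitary_mat_adj_mult[of n U] by (simp add: cmat_is_id_def cmat_mult_def cmat_adj_def)

lemma unitary_mat_mult:
  assumes "unitary_mat n X" "unitary_mat n E"
  shows "unitary_mat n (cmat_mult n X E)"
proof -
  have X: "cmat_is_id n (cmat_mult n X (cmat_adj X))" and E: "cmat_is_id n (cmat_mult n E (cmat_adj E))"
    using assms unitary_mat_iff_mult_adj by auto
  have "cmat_mult n (cmat_mult n X E) (cmat_adj (cmat_mult n X E)) =
      cmat_mult n X (cmat_mult n (cmat_mult n E (cmat_adj E)) (cmat_adj X))"
    by (simp only: cmat_adj_mult cmat_mult_assoc)
  also have "cmat_mult n X (cmat_mult n (cmat_mult n E (cmat_adj E)) (cmat_adj X)) i j =
      cmat_mult n X (cmat_adj X) i j" if "i < n" "j < n" for i j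
    by (rule cmat_mult_cong) (use that cmat_mult_id_left[OF E] in auto)
  ultimately show ?thesis
    using X by (simp add: unitary_mat_iff_mult_adj cmat_is_id_def)
qed

lemma unitary_mat_extend:
  assumes "unitary_mat n U"
  shows "unitary_mat (Suc n) (cmat_extend n U)"
  unfolding unitary_mat_def
proof (intro allI impI)
  fix i j assume ij: "i < Suc n" "j < Suc n"
  show "(\<Sum>m<Suc n. cmat_extend n U i m * cnj (cmat_extend n U j m)) = (if i = j then 1 else 0)"
  proof (cases "i < n \<and> j < n")
    case True
    then have "(\<Sum>m<n. cmat_extend n U i m * cnj (cmat_extend n U j m)) = (\<Sum>m<n. U i m * cnj (U j m))"
      by (intro sum.cong) (auto simp: cmat_extend_def)
    then show ?thesis using True assms by (simp add: unitary_mat_def cmat_extend_def)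
  next
    case False
    then have "(\<Sum>m<n. cmat_extend n U i m * cnj (cmat_extend n U j m)) = 0"
      by (intro sum.neutral) (auto simp: cmat_extend_def)
    then show ?thesis using False ij by (auto simp: cmat_extend_def)
  qed
qed

lemma unitary_mat_conj_cancel:
  assumes "unitary_mat n X" "unitary_mat n Y" "i < n" "p < n"
  shows "cmat_mult n (cmat_mult n X (cmat_mult n (cmat_mult n (cmat_adj X) A) Y)) (cmat_adj Y) i p = A i p"
proof -
  have X: "cmat_is_id n (cmat_mult n X (cmat_adj X))" and Y: "cmat_is_id n (cmat_mult n Y (cmat_adj Y))"
    using assms unitary_mat_iff_mult_adj by auto
  have "cmat_mult n (cmat_mult n X (cmat_mult n (cmat_mult n (cmat_adj X) A) Y)) (cmat_adj Y) =
        cmat_mult n (cmat_mult n (cmat_mult n X (cmat_adj X)) A) (cmat_mult n Y (cmat_adj Y))"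
    by (simp only: cmat_mult_assoc)
  then show ?thesis
    using assms(3,4) cmat_mult_id_right[OF Y] cmat_mult_id_left[OF X] by simp
qed

lemma sum_mult_cnj_eq_norm_sum:
  "(\<Sum>i<n. f i * cnj (f i)) = of_real (\<Sum>i<n. (cmod (f i))\<^sup>2)"
  by (simp only: of_real_sum complex_norm_square)

lemma unitary_mat_row_norm:
  assumes "unitary_mat n U" "i < n"
  shows "(\<Sum>m<n. (cmod (U i m))\<^sup>2) = 1"
proof -
  have "(\<Sum>m<n. U i m * cnj (U i m)) = 1"
    using assms by (simp add: unitary_mat_def)
  then show ?thesis unfolding sum_mult_cnj_eq_norm_sum by (metis of_real_1 of_real_eq_iff)
qed

lemma unitary_mat_column_norm:
  assumes "unitary_mat n U" "m < n"
  shows "(\<Sum>i<n. (cmod (U i m))\<^sup>2) = 1"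
proof -
  have "(\<Sum>i<n. U i m * cnj (U i m)) = 1"
    using unitary_mat_columns[OF assms(1,2,2)] by (simp add: mult.commute)
  then show ?thesis unfolding sum_mult_cnj_eq_norm_sum by (metis of_real_1 of_real_eq_iff)
qed

lemma cmat_vec_norm_square:
  fixes A :: cmat
  shows "(\<Sum>k<n. (\<Sum>j<n. A k j * v j) * cnj (\<Sum>i<n. A k i * v i))
       = (\<Sum>i<n. cnj (v i) * (\<Sum>j<n. (\<Sum>k<n. cnj (A k i) * A k j) * v j))"
proof -
  have "(\<Sum>k<n. (\<Sum>j<n. A k j * v j) * cnj (\<Sum>i<n. A k i * v i))
      = (\<Sum>k<n. \<Sum>j<n. \<Sum>i<n. (A k j * v j) * (cnj (A k i) * cnj (v i)))"
    by (simp only: cnj_sum complex_cnj_mult sum_product)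
  also have "\<dots> = (\<Sum>k<n. \<Sum>i<n. \<Sum>j<n. (A k j * v j) * (cnj (A k i) * cnj (v i)))"
    by (rule sum.cong[OF refl], rule sum.swap)
  also have "\<dots> = (\<Sum>i<n. \<Sum>k<n. \<Sum>j<n. (A k j * v j) * (cnj (A k i) * cnj (v i)))"
    by (rule sum.swap)
  also have "\<dots> = (\<Sum>i<n. \<Sum>j<n. \<Sum>k<n. (A k j * v j) * (cnj (A k i) * cnj (v i)))"
    by (rule sum.cong[OF refl], rule sum.swap)
  also have "\<dots> = (\<Sum>i<n. \<Sum>j<n. \<Sum>k<n. cnj (v i) * ((cnj (A k i) * A k j) * v j))"
    by (intro sum.cong refl) (simp only: mult_ac)
  also have "\<dots> = (\<Sum>i<n. cnj (v i) * (\<Sum>j<n. (\<Sum>k<n. cnj (A k i) * A k j) * v j))"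
    by (simp only: sum_distrib_left sum_distrib_right)
  finally show ?thesis .
qed

lemma cmat_adj_mult_vec:
  fixes A :: cmat
  shows "(\<Sum>k<n. cnj (A k p) * (\<Sum>j<n. A k j * v j)) = (\<Sum>j<n. (\<Sum>k<n. cnj (A k p) * A k j) * v j)"
proof -
  have "(\<Sum>k<n. cnj (A k p) * (\<Sum>j<n. A k j * v j)) = (\<Sum>k<n. \<Sum>j<n. cnj (A k p) * (A k j * v j))"
    by (simp only: sum_distrib_left)
  also have "\<dots> = (\<Sum>j<n. \<Sum>k<n. cnj (A k p) * (A k j * v j))" by (rule sum.swap)
  also have "\<dots> = (\<Sum>j<n. (\<Sum>k<n. cnj (A k p) * A k j) * v j)"
    by (simp only: sum_distrib_right mult.assoc)
  finally show ?thesis .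
qed

lemma unitary_mat_preserves_norm:
  assumes "unitary_mat n U"
  shows "(\<Sum>k<n. (\<Sum>j<n. U k j * w j) * cnj (\<Sum>i<n. U k i * w i)) = (\<Sum>i<n. w i * cnj (w i))"
proof -
  have "(\<Sum>j<n. (\<Sum>k<n. cnj (U k i) * U k j) * w j) = w i" if "i < n" for i
  proof -
    have "(\<Sum>j<n. (\<Sum>k<n. cnj (U k i) * U k j) * w j) = (\<Sum>j<n. if i = j then w j else 0)"
      by (rule sum.cong) (use unitary_mat_columns[OF assms that] in auto)
    then show ?thesis using that by simp
  qed
  then show ?thesis
    unfolding cmat_vec_norm_square by (simp add: mult.commute)
qed

lemma exists_normalization:
  fixes f :: "nat \<Rightarrow> complex"
  assumes "\<exists>i<n. f i \<noteq> 0"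
  shows "\<exists>c>0. (\<Sum>i<n. (f i / of_real c) * cnj (f i / of_real c)) = 1 \<and>
    (\<Sum>i<n. f i * cnj (f i)) = of_real (c\<^sup>2)"
proof -
  define N where "N = (\<Sum>i<n. (cmod (f i))\<^sup>2)"
  obtain i where i: "i < n" "f i \<noteq> 0" using assms by auto
  have "N > 0" unfolding N_def
    by (rule sum_pos2[of _ i]) (use i in auto)
  define c where "c = sqrt N"
  have c: "c > 0" "c\<^sup>2 = N" using \<open>N > 0\<close> by (auto simp: c_def)
  have fN: "(\<Sum>i<n. f i * cnj (f i)) = of_real N" unfolding N_def by (rule sum_mult_cnj_eq_norm_sum)
  have "(\<Sum>i<n. (f i / of_real c) * cnj (f i / of_real c)) = (\<Sum>i<n. f i * cnj (f i)) / of_real (c\<^sup>2)"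
    by (simp add: sum_divide_distrib power2_eq_square)
  also have "\<dots> = 1" using c \<open>N > 0\<close> unfolding fN by simp
  finally show ?thesis using c fN by auto
qed

section \<open>Singular value decomposition\<close>

definition householder :: "nat \<Rightarrow> (nat \<Rightarrow> complex) \<Rightarrow> cmat" where
  "householder n w = (\<lambda>i j. (if i = j then 1 else 0) - 2 * w i * cnj (w j) / (\<Sum>m<n. w m * cnj (w m)))"

lemma unitary_householder:
  assumes c0: "(\<Sum>m<n. w m * cnj (w m)) \<noteq> 0"
  shows "unitary_mat n (householder n w)"
  unfolding unitary_mat_def
proof (intro allI impI)
  fix i j assume ij: "i < n" "j < n"
  define c where "c = (\<Sum>m<n. w m * cnj (w m))"
  define H where "H = householder n w"
  have cnj_H: "cnj (H i j) = (if i = j then 1 else 0) - 2 * cnj (w i) * w j / c" for i j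
  proof -
    have "cnj c = c" by (simp add: c_def cnj_sum mult.commute)
    then show ?thesis by (simp add: H_def householder_def c_def[symmetric])
  qed
  have "(\<Sum>m<n. H i m * cnj (H j m)) = (\<Sum>m<n.
        (if i = m then 1 else 0) * (if j = m then 1 else 0)
      - (if i = m then 2 * cnj (w j) * w m / c else 0)
      - (if j = m then 2 * w i * cnj (w m) / c else 0)
      + (4 * w i * cnj (w j) / (c * c)) * (w m * cnj (w m)))"
    unfolding cnj_H by (rule sum.cong) (auto simp: H_def householder_def c_def[symmetric] algebra_simps)
  also have "\<dots> = (if i = j then 1 else 0) - 2 * cnj (w j) * w i / c - 2 * w i * cnj (w j) / c
       + (4 * w i * cnj (w j) / (c * c)) * c"
  proof -
    have "(\<Sum>m<n. (if i = m then 1 else 0) * (if j = m then 1 else 0)) = (\<Sum>m<n. if i = m then (if j = i then 1 else 0) else (0::complex))"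
      by (rule sum.cong) auto
    moreover have "(\<Sum>m<n. (4 * w i * cnj (w j) / (c * c)) * (w m * cnj (w m))) = (4 * w i * cnj (w j) / (c * c)) * c"
      by (simp only: sum_distrib_left[symmetric] c_def)
    ultimately show ?thesis
      using ij by (simp add: sum.distrib sum_subtractf sum.delta')
  qed
  also have "\<dots> = (if i = j then 1 else 0)" using c0 by (simp add: c_def[symmetric] field_simps)
  finally show "(\<Sum>m<n. householder n w i m * cnj (householder n w j m)) = (if i = j then 1 else 0)"
    by (simp add: H_def)
qed

lemma unimodular_phase:
  fixes z :: complex
  defines "\<phi> \<equiv> (if z = 0 then -1 else - z / of_real (cmod z))"
  shows "\<phi> * cnj \<phi> = 1" "cnj \<phi> * z = - of_real (cmod z)" "\<phi> * cnj z = - of_real (cmod z)"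
proof -
  have z: "z * cnj z = of_real ((cmod z)\<^sup>2)" by (metis complex_norm_square)
  show "\<phi> * cnj \<phi> = 1"
    using z by (cases "z = 0") (simp_all add: \<phi>_def field_simps power2_eq_square)
  show "cnj \<phi> * z = - of_real (cmod z)"
    using z by (cases "z = 0") (simp_all add: \<phi>_def field_simps power2_eq_square mult.commute)
  show "\<phi> * cnj z = - of_real (cmod z)"
    using z by (cases "z = 0") (simp_all add: \<phi>_def field_simps power2_eq_square mult.commute)
qed

lemma unitary_mat_scale_column:
  assumes "unitary_mat n H" "\<phi> * cnj \<phi> = 1"
  shows "unitary_mat n (\<lambda>i j. H i j * (if j = m then \<phi> else 1))"
  unfolding unitary_mat_def
proof (intro allI impI)
  fix i i' assume "i < n" "i' < n"
  have scaled: "H i j * (if j = m then \<phi> else 1) * cnj (H i' j * (if j = m then \<phi> else 1)) =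
      H i j * cnj (H i' j)" for j
  proof (cases "j = m")
    case True
    have "H i j * \<phi> * cnj (H i' j * \<phi>) = H i j * cnj (H i' j) * (\<phi> * cnj \<phi>)"
      by (simp add: mult_ac)
    then show ?thesis using True assms(2) by simp
  qed simp
  have "(\<Sum>j<n. H i j * (if j = m then \<phi> else 1) * cnj (H i' j * (if j = m then \<phi> else 1))) =
      (\<Sum>j<n. H i j * cnj (H i' j))"
    by (rule sum.cong [OF refl]) (rule scaled)
  then show "(\<Sum>j<n. H i j * (if j = m then \<phi> else 1) * cnj (H i' j * (if j = m then \<phi> else 1))) =
      (if i = i' then 1 else 0)"
    using assms(1) \<open>i < n\<close> \<open>i' < n\<close> by (simp add: unitary_mat_def)
qed

text \<open>The phase \<open>\<phi>\<close> gives the last entry of \<open>w = u - \<phi> e\<^sub>n\<close> modulus \<open>1 + \<bar>u\<^sub>n\<bar>\<close>, so \<open>w \<noteq> 0\<close>;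
  the Householder reflection along \<open>w\<close> maps \<open>e\<^sub>n\<close> to \<open>cnj \<phi> \<cdot> u\<close>.\<close>
lemma exists_unitary_last_column:
  assumes unit: "(\<Sum>i<Suc n. u i * cnj (u i)) = 1"
  shows "\<exists>X. unitary_mat (Suc n) X \<and> (\<forall>i<Suc n. X i n = u i)"
proof -
  define \<phi> where "\<phi> = (if u n = 0 then -1 else - u n / of_real (cmod (u n)))"
  note \<phi> = unimodular_phase[of "u n", folded \<phi>_def]
  define r where "r = (of_real (cmod (u n)) :: complex)"
  define w where "w i = u i - (if i = n then \<phi> else 0)" for i
  define c where "c = (\<Sum>i<Suc n. w i * cnj (w i))"
  have "(\<Sum>i<n. w i * cnj (w i)) = 1 - u n * cnj (u n)"
    using unit by (simp add: w_def eq_diff_eq)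
  moreover have "w n * cnj (w n) = u n * cnj (u n) - cnj (\<phi> * cnj (u n)) - \<phi> * cnj (u n) + \<phi> * cnj \<phi>"
    by (simp add: w_def algebra_simps)
  ultimately have c_eq: "c = 2 + 2 * r"
    using \<phi> by (simp add: c_def r_def)
  have c0: "c \<noteq> 0"
  proof -
    have "Re c = 2 + 2 * cmod (u n)" by (simp add: c_eq r_def)
    then have "Re c > 0" using norm_ge_zero[of "u n"] by linarith
    then show ?thesis by auto
  qed
  define H where "H = householder (Suc n) w"
  define X where "X i j = H i j * (if j = n then \<phi> else 1)" for i j
  have "unitary_mat (Suc n) X"
    unfolding X_def H_def using unitary_householder[where n = "Suc n" and w = w] c0 \<phi>(1)
    by (intro unitary_mat_scale_column) (simp_all add: c_def del: sum.lessThan_Suc)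
  moreover have "X i n = u i" if "i < Suc n" for i
  proof -
    have wn: "cnj (w n) * \<phi> = - r - 1"
      using \<phi> by (simp add: w_def r_def algebra_simps)
    have "X i n = (if i = n then \<phi> else 0) - 2 * w i * (cnj (w n) * \<phi>) / c"
      by (simp add: X_def H_def householder_def c_def algebra_simps del: sum.lessThan_Suc)
    also have "\<dots> = (if i = n then \<phi> else 0) + w i * (2 + 2 * r) / c"
      unfolding wn using c0 by (simp add: field_simps)
    also have "\<dots> = u i" using c0 by (simp add: c_eq[symmetric] w_def)
    finally show ?thesis .
  qed
  ultimately show ?thesis by blast
qed

definition singular_pair :: "nat \<Rightarrow> cmat \<Rightarrow> real \<Rightarrow> (nat \<Rightarrow> complex) \<Rightarrow> (nat \<Rightarrow> complex) \<Rightarrow> bool" where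
  "singular_pair n A \<sigma> u v \<longleftrightarrow> 0 \<le> \<sigma> \<and>
     (\<Sum>i<n. u i * cnj (u i)) = 1 \<and> (\<Sum>i<n. v i * cnj (v i)) = 1 \<and>
     (\<forall>i<n. (\<Sum>p<n. A i p * v p) = of_real \<sigma> * u i) \<and>
     (\<forall>p<n. (\<Sum>i<n. cnj (A i p) * u i) = of_real \<sigma> * v p)"

lemma singular_pair_of_null_vector:
  fixes A :: cmat
  assumes nz: "\<exists>i<n. v0 i \<noteq> 0" and null: "\<forall>i<n. (\<Sum>j<n. A i j * v0 j) = 0"
  shows "\<exists>u v. singular_pair n A 0 u v"
proof -
  obtain a where a: "a > 0" "(\<Sum>i<n. (v0 i / of_real a) * cnj (v0 i / of_real a)) = 1"
    using exists_normalization[OF nz] by blast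
  obtain w where w: "\<exists>i<n. w i \<noteq> 0" "\<forall>j<n. (\<Sum>i<n. w i * A i j) = 0"
    using cmat_has_left_null_vector[OF nz null] by blast
  obtain c where c: "c > 0" "(\<Sum>i<n. (w i / of_real c) * cnj (w i / of_real c)) = 1"
    using exists_normalization[OF w(1)] by blast
  define u where "u i = cnj (w i) / of_real c" for i
  define v where "v i = v0 i / of_real a" for i
  have "(\<Sum>i<n. cnj (A i p) * u i) = 0" if "p < n" for p
  proof -
    have "(\<Sum>i<n. cnj (A i p) * u i) = cnj (\<Sum>i<n. w i * A i p) / of_real c"
      by (simp add: u_def cnj_sum sum_divide_distrib mult.commute)
    then show ?thesis using w(2) that by simp
  qed
  moreover have "(\<Sum>p<n. A i p * v p) = 0" if "i < n" for i
    using null that by (simp add: v_def sum_divide_distrib [symmetric])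
  moreover have "(\<Sum>i<n. u i * cnj (u i)) = 1" "(\<Sum>i<n. v i * cnj (v i)) = 1"
    using a(2) c(2) by (simp_all add: u_def v_def mult.commute)
  ultimately have "singular_pair n A 0 u v"
    by (simp add: singular_pair_def)
  then show ?thesis by blast
qed

lemma singular_pair_of_eigenvector:
  fixes A :: cmat
  assumes nz: "\<exists>i<n. v0 i \<noteq> 0"
    and ev: "\<forall>i<n. (\<Sum>j<n. (\<Sum>k<n. cnj (A k i) * A k j) * v0 j) = e * v0 i"
    and image_nz: "\<exists>k<n. (\<Sum>j<n. A k j * v0 j) \<noteq> 0"
  shows "\<exists>\<sigma> u v. singular_pair n A \<sigma> u v"
proof -
  define y where "y k = (\<Sum>j<n. A k j * v0 j)" for k
  obtain a where a: "a > 0" "(\<Sum>i<n. (v0 i / of_real a) * cnj (v0 i / of_real a)) = 1"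
      "(\<Sum>i<n. v0 i * cnj (v0 i)) = of_real (a\<^sup>2)"
    using exists_normalization[OF nz] by blast
  obtain b where b: "b > 0" "(\<Sum>i<n. (y i / of_real b) * cnj (y i / of_real b)) = 1"
      "(\<Sum>i<n. y i * cnj (y i)) = of_real (b\<^sup>2)"
    using exists_normalization[of n y] image_nz by (auto simp: y_def)
  have "(\<Sum>k<n. y k * cnj (y k)) = (\<Sum>i<n. cnj (v0 i) * (\<Sum>j<n. (\<Sum>k<n. cnj (A k i) * A k j) * v0 j))"
    unfolding y_def by (rule cmat_vec_norm_square)
  also have "\<dots> = e * (\<Sum>i<n. v0 i * cnj (v0 i))"
    using ev by (simp add: sum_distrib_left algebra_simps)
  finally have "e * of_real (a\<^sup>2) = of_real (b\<^sup>2)" using a(3) b(3) by simp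
  then have e: "e = of_real (b\<^sup>2 / a\<^sup>2)" using a(1) by (simp add: field_simps)
  define u where "u i = y i / of_real b" for i
  define v where "v i = v0 i / of_real a" for i
  have "singular_pair n A (b / a) u v"
    unfolding singular_pair_def
  proof (intro conjI allI impI)
    show "0 \<le> b / a" using a b by simp
    show "(\<Sum>i<n. u i * cnj (u i)) = 1" using b(2) by (simp add: u_def)
    show "(\<Sum>i<n. v i * cnj (v i)) = 1" using a(2) by (simp add: v_def)
    have "(\<Sum>p<n. A i p * v p) = y i / of_real a" for i
      by (simp add: v_def y_def sum_divide_distrib)
    then show "(\<Sum>p<n. A i p * v p) = of_real (b / a) * u i" for i
      using a b by (simp add: u_def field_simps)
  next
    fix p assume "p < n"
    have "(\<Sum>i<n. cnj (A i p) * u i) = (\<Sum>k<n. cnj (A k p) * y k) / of_real b"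
      by (simp add: u_def sum_divide_distrib)
    also have "\<dots> = e * v0 p / of_real b"
      using cmat_adj_mult_vec[where n=n and A=A and p=p and v=v0] ev \<open>p < n\<close> by (simp add: y_def)
    also have "\<dots> = of_real (b / a) * v p"
      using a b by (simp add: e v_def field_simps power2_eq_square)
    finally show "(\<Sum>i<n. cnj (A i p) * u i) = of_real (b / a) * v p" .
  qed
  then show ?thesis by blast
qed

lemma exists_singular_pair:
  fixes A :: cmat
  assumes "0 < n"
  shows "\<exists>\<sigma> u v. singular_pair n A \<sigma> u v"
proof -
  obtain e v0 where v0: "\<exists>i<n. v0 i \<noteq> 0" "\<forall>i<n. (\<Sum>j<n. (\<Sum>k<n. cnj (A k i) * A k j) * v0 j) = e * v0 i"
    using cmat_has_eigenvector[OF assms, of "\<lambda>i j. \<Sum>k<n. cnj (A k i) * A k j"] by blast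
  show ?thesis
  proof (cases "\<exists>k<n. (\<Sum>j<n. A k j * v0 j) \<noteq> 0")
    case True
    then show ?thesis using singular_pair_of_eigenvector[OF v0] by blast
  next
    case False
    then have "\<forall>k<n. (\<Sum>j<n. A k j * v0 j) = 0" by auto
    from singular_pair_of_null_vector[OF v0(1) this] show ?thesis by blast
  qed
qed

definition has_svd :: "nat \<Rightarrow> cmat \<Rightarrow> (nat \<Rightarrow> real) \<Rightarrow> bool" where
  "has_svd n A s \<longleftrightarrow> (\<exists>U V. unitary_mat n U \<and> unitary_mat n V \<and>
     (\<forall>i<n. \<forall>p<n. A i p = (\<Sum>m<n. U i m * complex_of_real (s m) * cnj (V p m))))"

lemma is_singular_values_iff:
  "is_singular_values d a s \<longleftrightarrow> (\<forall>j. 0 \<le> s j) \<and> (\<forall>j. d \<le> j \<longrightarrow> s j = 0) \<and>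
     (\<forall>i j. i \<le> j \<longrightarrow> j < d \<longrightarrow> s j \<le> s i) \<and> has_svd d a s"
  unfolding is_singular_values_def has_svd_def ..

lemma has_svd_unitary_conj:
  assumes B: "has_svd n B s" and X: "unitary_mat n X" and Y: "unitary_mat n Y"
    and A: "\<forall>i<n. \<forall>p<n. A i p = cmat_mult n (cmat_mult n X B) (cmat_adj Y) i p"
  shows "has_svd n A s"
proof -
  obtain U V where UV: "unitary_mat n U" "unitary_mat n V"
    "\<forall>i<n. \<forall>p<n. B i p = (\<Sum>m<n. U i m * complex_of_real (s m) * cnj (V p m))"
    using B by (auto simp: has_svd_def)
  define S where "S = cmat_diag (\<lambda>m. complex_of_real (s m))"
  have SVD: "cmat_mult n (cmat_mult n U S) (cmat_adj V) i p = (\<Sum>m<n. U i m * complex_of_real (s m) * cnj (V p m))"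
    for U V i p
    unfolding S_def cmat_mult_diag by (simp add: cmat_adj_def)
  have "A i p = cmat_mult n (cmat_mult n (cmat_mult n X U) S) (cmat_adj (cmat_mult n Y V)) i p"
    if "i < n" "p < n" for i p
  proof -
    have "A i p = cmat_mult n (cmat_mult n X (cmat_mult n (cmat_mult n U S) (cmat_adj V))) (cmat_adj Y) i p"
      using A UV(3) that by (auto simp: SVD intro!: cmat_mult_cong)
    then show ?thesis by (simp only: cmat_adj_mult cmat_mult_assoc)
  qed
  then show ?thesis
    unfolding has_svd_def SVD using X Y UV(1,2) by (blast intro: unitary_mat_mult)
qed

lemma has_svd_extend:
  assumes B': "has_svd n B' s"
    and B_upper: "\<forall>i<n. \<forall>p<n. B i p = B' i p"
    and B_last: "\<forall>i<Suc n. B i n = (if i = n then of_real \<sigma> else 0) \<and> B n i = (if i = n then of_real \<sigma> else 0)"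
  shows "has_svd (Suc n) B (s(n := \<sigma>))"
proof -
  obtain U V where UV: "unitary_mat n U" "unitary_mat n V"
    "\<forall>i<n. \<forall>p<n. B' i p = (\<Sum>m<n. U i m * complex_of_real (s m) * cnj (V p m))"
    using B' by (auto simp: has_svd_def)
  have "B i p = (\<Sum>m<Suc n. cmat_extend n U i m * of_real ((s(n := \<sigma>)) m) * cnj (cmat_extend n V p m))"
    if "i < Suc n" "p < Suc n" for i p
  proof (cases "i < n \<and> p < n")
    case True
    then show ?thesis using B_upper UV(3) by (simp add: cmat_extend_def)
  next
    case False
    have "(\<Sum>m<n. cmat_extend n U i m * of_real ((s(n := \<sigma>)) m) * cnj (cmat_extend n V p m)) = 0"
      using False that by (intro sum.neutral) (auto simp: cmat_extend_def)
    then show ?thesis using False that B_last by (auto simp: cmat_extend_def)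
  qed
  then show ?thesis
    unfolding has_svd_def using UV(1,2) unitary_mat_extend by blast
qed

lemma singular_pair_deflation:
  assumes X: "unitary_mat (Suc n) X" "\<forall>i<Suc n. X i n = u i"
    and Y: "unitary_mat (Suc n) Y" "\<forall>i<Suc n. Y i n = v i"
    and pair: "singular_pair (Suc n) A \<sigma> u v"
    and i: "i < Suc n"
  defines "B \<equiv> cmat_mult (Suc n) (cmat_mult (Suc n) (cmat_adj X) A) Y"
  shows "B i n = (if i = n then of_real \<sigma> else 0)" "B n i = (if i = n then of_real \<sigma> else 0)"
proof -
  have Av: "\<forall>i<Suc n. (\<Sum>p<Suc n. A i p * v p) = of_real \<sigma> * u i"
    and Au: "\<forall>p<Suc n. (\<Sum>i<Suc n. cnj (A i p) * u i) = of_real \<sigma> * v p"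
    using pair by (simp_all add: singular_pair_def del: sum.lessThan_Suc)
  have "B i n = (\<Sum>b<Suc n. \<Sum>a<Suc n. cnj (X a i) * A a b * Y b n)"
    unfolding B_def cmat_mult_def cmat_adj_def by (simp only: sum_distrib_right)
  also have "\<dots> = (\<Sum>a<Suc n. cnj (X a i) * (\<Sum>b<Suc n. A a b * v b))"
    using Y(2) by (subst sum.swap) (simp add: sum_distrib_left mult.assoc del: sum.lessThan_Suc)
  also have "\<dots> = of_real \<sigma> * (\<Sum>a<Suc n. cnj (X a i) * X a n)"
    using Av X(2) by (simp add: sum_distrib_left algebra_simps del: sum.lessThan_Suc)
  finally show "B i n = (if i = n then of_real \<sigma> else 0)"
    using unitary_mat_columns[OF X(1) i, of n] by simp
  have "(\<Sum>a<Suc n. cnj (X a n) * A a b) = of_real \<sigma> * cnj (v b)" if "b < Suc n" for b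
  proof -
    have "(\<Sum>a<Suc n. cnj (X a n) * A a b) = cnj (\<Sum>a<Suc n. cnj (A a b) * u a)"
      using X(2) by (simp add: cnj_sum mult.commute del: sum.lessThan_Suc)
    also have "\<dots> = of_real \<sigma> * cnj (v b)"
      using Au that by (simp del: sum.lessThan_Suc)
    finally show ?thesis .
  qed
  then have "B n i = (\<Sum>b<Suc n. of_real \<sigma> * cnj (Y b n) * Y b i)"
    using Y(2) by (simp add: B_def cmat_mult_def cmat_adj_def del: sum.lessThan_Suc)
  also have "\<dots> = of_real \<sigma> * (\<Sum>b<Suc n. cnj (Y b n) * Y b i)"
    by (simp add: sum_distrib_left mult.assoc del: sum.lessThan_Suc)
  finally show "B n i = (if i = n then of_real \<sigma> else 0)"
    using unitary_mat_columns[OF Y(1) _ i, of n] by auto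
qed

lemma exists_svd_unsorted: "\<exists>s. (\<forall>m. 0 \<le> s m) \<and> has_svd n A s"
proof (induction n arbitrary: A)
  case 0
  show ?case by (auto simp: has_svd_def unitary_mat_def)
next
  case (Suc n)
  obtain \<sigma> u v where sv: "singular_pair (Suc n) A \<sigma> u v"
    using exists_singular_pair[of "Suc n" A] by auto
  then have "0 \<le> \<sigma>" "(\<Sum>i<Suc n. u i * cnj (u i)) = 1" "(\<Sum>i<Suc n. v i * cnj (v i)) = 1"
    by (simp_all add: singular_pair_def del: sum.lessThan_Suc)
  obtain X where X: "unitary_mat (Suc n) X" "\<forall>i<Suc n. X i n = u i"
    using exists_unitary_last_column[OF \<open>(\<Sum>i<Suc n. u i * cnj (u i)) = 1\<close>] by auto
  obtain Y where Y: "unitary_mat (Suc n) Y" "\<forall>i<Suc n. Y i n = v i"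
    using exists_unitary_last_column[OF \<open>(\<Sum>i<Suc n. v i * cnj (v i)) = 1\<close>] by auto
  define B where "B = cmat_mult (Suc n) (cmat_mult (Suc n) (cmat_adj X) A) Y"
  obtain s where s: "\<forall>m. 0 \<le> s m" "has_svd n B s"
    using Suc.IH by blast
  have "has_svd (Suc n) B (s(n := \<sigma>))"
    using singular_pair_deflation[OF X Y sv] by (intro has_svd_extend[OF s(2)]) (auto simp: B_def)
  moreover have "\<forall>i<Suc n. \<forall>p<Suc n. A i p = cmat_mult (Suc n) (cmat_mult (Suc n) X B) (cmat_adj Y) i p"
    using unitary_mat_conj_cancel[OF X(1) Y(1)] by (simp add: B_def)
  ultimately have "has_svd (Suc n) A (s(n := \<sigma>))"
    using has_svd_unitary_conj X(1) Y(1) by blast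
  moreover have "\<forall>m. 0 \<le> (s(n := \<sigma>)) m"
    using s(1) \<open>0 \<le> \<sigma>\<close> by simp
  ultimately show ?case by blast
qed

lemma exists_sorting_permutation:
  fixes s :: "nat \<Rightarrow> real"
  obtains \<pi> where "\<pi> permutes {..<d}" "\<And>i j. i \<le> j \<Longrightarrow> j < d \<Longrightarrow> s (\<pi> j) \<le> s (\<pi> i)"
proof -
  define xs where "xs = map s [0..<d]"
  define ys where "ys = rev (sort xs)"
  have "mset ys = mset xs" by (simp add: ys_def)
  then obtain \<pi> where \<pi>: "\<pi> permutes {..<length xs}" "permute_list \<pi> xs = ys"
    using mset_eq_permutation by metis
  have lx: "length xs = d" by (simp add: xs_def)
  have nth: "s (\<pi> i) = ys ! i" if "i < d" for i
  proof -
    have "ys ! i = xs ! \<pi> i" using permute_list_nth[OF \<pi>(1)] \<pi>(2) that lx by metis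
    moreover have "\<pi> i < d" using permutes_in_image[OF \<pi>(1)] that lx by simp
    ultimately show ?thesis by (simp add: xs_def)
  qed
  have "s (\<pi> j) \<le> s (\<pi> i)" if "i \<le> j" "j < d" for i j
  proof -
    have "ys ! j = sort xs ! (d - Suc j)" "ys ! i = sort xs ! (d - Suc i)"
      using that lx by (simp_all add: ys_def rev_nth)
    moreover have "sort xs ! (d - Suc j) \<le> sort xs ! (d - Suc i)"
      by (rule sorted_nth_mono) (use that lx in auto)
    ultimately show ?thesis using nth that by simp
  qed
  then show ?thesis using that \<pi>(1) lx by auto
qed

lemma has_svd_permute:
  assumes "has_svd n A s" "\<pi> permutes {..<n}"
  shows "has_svd n A (\<lambda>m. if m < n then s (\<pi> m) else 0)"
proof -
  obtain U V where UV: "unitary_mat n U" "unitary_mat n V"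
    "\<forall>i<n. \<forall>p<n. A i p = (\<Sum>m<n. U i m * of_real (s m) * cnj (V p m))"
    using assms(1) by (auto simp: has_svd_def)
  have perm: "(\<Sum>m<n. g (\<pi> m)) = (\<Sum>m<n. g m)" for g :: "nat \<Rightarrow> complex"
    using sum.permute[OF assms(2), of g] by (simp add: comp_def)
  have "unitary_mat n (\<lambda>i m. U i (\<pi> m))" "unitary_mat n (\<lambda>i m. V i (\<pi> m))"
    using UV(1,2) perm[of "\<lambda>m. U _ m * cnj (U _ m)"] perm[of "\<lambda>m. V _ m * cnj (V _ m)"]
    by (simp_all add: unitary_mat_def)
  moreover have "A i p = (\<Sum>m<n. U i (\<pi> m) * of_real (if m < n then s (\<pi> m) else 0) * cnj (V p (\<pi> m)))"
    if "i < n" "p < n" for i p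
    using UV(3) that perm[of "\<lambda>m. U i m * of_real (s m) * cnj (V p m)"] by simp
  ultimately show ?thesis unfolding has_svd_def by blast
qed

lemma exists_singular_values: "\<exists>s. is_singular_values d a s"
proof -
  obtain s where s: "\<forall>m. 0 \<le> s m" "has_svd d a s"
    using exists_svd_unsorted by blast
  obtain \<pi> where \<pi>: "\<pi> permutes {..<d}" "\<And>i j. i \<le> j \<Longrightarrow> j < d \<Longrightarrow> s (\<pi> j) \<le> s (\<pi> i)"
    using exists_sorting_permutation by blast
  have "is_singular_values d a (\<lambda>m. if m < d then s (\<pi> m) else 0)"
    unfolding is_singular_values_iff using s \<pi> has_svd_permute by auto
  then show ?thesis by blast
qed

lemma schmidt_singular_values: "is_singular_values d a (schmidt d a)"
  unfolding schmidt_def using exists_singular_values by (rule someI_ex)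

lemma norm_sum_mult_cnj_le_1:
  assumes "(\<Sum>i<n. (cmod (x i))\<^sup>2) = 1" "(\<Sum>i<n. (cmod (y i))\<^sup>2) = 1"
  shows "cmod (\<Sum>i<n. x i * cnj (y i)) \<le> 1"
proof -
  have "cmod (\<Sum>i<n. x i * cnj (y i)) \<le> (\<Sum>i<n. cmod (x i * cnj (y i)))" by (rule norm_sum)
  also have "\<dots> = (\<Sum>i<n. cmod (x i) * cmod (y i))" by (simp add: norm_mult)
  also have "\<dots> \<le> (\<Sum>i<n. ((cmod (x i))\<^sup>2 + (cmod (y i))\<^sup>2) / 2)"
  proof (rule sum_mono)
    fix i
    have "0 \<le> (cmod (x i) - cmod (y i))\<^sup>2" by simp
    then show "cmod (x i) * cmod (y i) \<le> ((cmod (x i))\<^sup>2 + (cmod (y i))\<^sup>2) / 2"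
      by (simp add: power2_eq_square algebra_simps)
  qed
  also have "\<dots> = 1" using assms by (simp add: sum.distrib sum_divide_distrib[symmetric])
  finally show ?thesis .
qed

lemma has_svd_trace_le:
  assumes "has_svd d a s" "\<forall>m. 0 \<le> s m"
  shows "cmod (\<Sum>i<d. a i i) \<le> (\<Sum>m<d. s m)"
proof -
  obtain U V where UV: "unitary_mat d U" "unitary_mat d V"
    "\<forall>i<d. \<forall>p<d. a i p = (\<Sum>m<d. U i m * complex_of_real (s m) * cnj (V p m))"
    using assms(1) by (auto simp: has_svd_def)
  have "(\<Sum>i<d. a i i) = (\<Sum>i<d. \<Sum>m<d. U i m * complex_of_real (s m) * cnj (V i m))"
    using UV(3) by simp
  also have "\<dots> = (\<Sum>m<d. \<Sum>i<d. U i m * complex_of_real (s m) * cnj (V i m))"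
    by (rule sum.swap)
  also have "\<dots> = (\<Sum>m<d. of_real (s m) * (\<Sum>i<d. U i m * cnj (V i m)))"
    by (simp only: sum_distrib_left mult_ac)
  finally have "cmod (\<Sum>i<d. a i i) \<le> (\<Sum>m<d. cmod (of_real (s m) * (\<Sum>i<d. U i m * cnj (V i m))))"
    by (simp only: norm_sum)
  also have "\<dots> \<le> (\<Sum>m<d. s m)"
  proof (rule sum_mono)
    fix m assume "m \<in> {..<d}"
    then have "cmod (\<Sum>i<d. U i m * cnj (V i m)) \<le> 1"
      by (intro norm_sum_mult_cnj_le_1 unitary_mat_column_norm UV) auto
    then show "cmod (of_real (s m) * (\<Sum>i<d. U i m * cnj (V i m))) \<le> s m"
      using assms(2) by (simp add: norm_mult mult_left_le)
  qed
  finally show ?thesis .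
qed

lemma has_svd_frobenius:
  assumes "has_svd d a s"
  shows "(\<Sum>i<d. \<Sum>p<d. (cmod (a i p))\<^sup>2) = (\<Sum>m<d. (s m)\<^sup>2)"
proof -
  obtain U V where UV: "unitary_mat d U" "unitary_mat d V"
    "\<forall>i<d. \<forall>p<d. a i p = (\<Sum>m<d. U i m * complex_of_real (s m) * cnj (V p m))"
    using assms by (auto simp: has_svd_def)
  have column: "(\<Sum>i<d. a i p * cnj (a i p)) = (\<Sum>m<d. of_real ((s m)\<^sup>2) * (cnj (V p m) * V p m))"
    if "p < d" for p
  proof -
    define w where "w m = complex_of_real (s m) * cnj (V p m)" for m
    have "(\<Sum>i<d. a i p * cnj (a i p)) = (\<Sum>i<d. (\<Sum>j<d. U i j * w j) * cnj (\<Sum>j<d. U i j * w j))"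
      using UV(3) that by (intro sum.cong) (auto simp: w_def mult.assoc)
    also have "\<dots> = (\<Sum>m<d. w m * cnj (w m))" by (rule unitary_mat_preserves_norm[OF UV(1)])
    finally show ?thesis by (simp add: w_def power2_eq_square algebra_simps)
  qed
  have "of_real (\<Sum>i<d. \<Sum>p<d. (cmod (a i p))\<^sup>2) = (\<Sum>i<d. \<Sum>p<d. a i p * cnj (a i p))"
    by (simp only: of_real_sum complex_norm_square)
  also have "\<dots> = (\<Sum>p<d. \<Sum>i<d. a i p * cnj (a i p))" by (rule sum.swap)
  also have "\<dots> = (\<Sum>p<d. \<Sum>m<d. of_real ((s m)\<^sup>2) * (cnj (V p m) * V p m))"
    using column by simp
  also have "\<dots> = (\<Sum>m<d. of_real ((s m)\<^sup>2) * (\<Sum>p<d. cnj (V p m) * V p m))"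
    by (subst sum.swap) (simp only: sum_distrib_left)
  also have "\<dots> = of_real (\<Sum>m<d. (s m)\<^sup>2)"
    using unitary_mat_columns[OF UV(2)] by simp
  finally show ?thesis by (metis of_real_eq_iff)
qed

section \<open>Uniqueness of singular values\<close>

lemma count_mset_map_upt: "count (mset (map f [0..<d])) x = card {i. i < d \<and> f i = x}"
proof -
  have "count_list xs x = length (filter (\<lambda>y. y = x) xs)" for xs :: "'a list"
    by (induction xs) auto
  moreover have "{i. i < d \<and> map f [0..<d] ! i = x} = {i. i < d \<and> f i = x}" by auto
  ultimately show ?thesis unfolding count_mset length_filter_conv_card by simp
qed

lemma sorted_rev_map_upt:
  fixes f :: "nat \<Rightarrow> real"
  assumes "\<forall>i j. i \<le> j \<longrightarrow> j < d \<longrightarrow> f j \<le> f i"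
  shows "sorted (rev (map f [0..<d]))"
  unfolding sorted_iff_nth_mono_less using assms by (simp add: rev_nth)

text \<open>The hypothesis on \<open>U\<close> says \<open>diag f \<cdot> U = U \<cdot> diag g\<close>.\<close>
lemma unitary_intertwining_card_eq:
  fixes f g :: "nat \<Rightarrow> real"
  assumes U: "unitary_mat d U"
    and fg: "\<forall>i<d. \<forall>m<d. f i \<noteq> g m \<longrightarrow> U i m = 0"
  shows "card {i. i < d \<and> f i = x} = card {m. m < d \<and> g m = x}"
proof -
  define I where "I = {i. i < d \<and> f i = x}"
  define J where "J = {m. m < d \<and> g m = x}"
  have IJ: "finite I" "finite J" "I \<subseteq> {..<d}" "J \<subseteq> {..<d}" by (auto simp: I_def J_def)
  have "real (card I) = (\<Sum>i\<in>I. 1)" by simp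
  also have "\<dots> = (\<Sum>i\<in>I. \<Sum>m<d. (cmod (U i m))\<^sup>2)"
    using unitary_mat_row_norm[OF U] IJ(3) by (intro sum.cong) auto
  also have "\<dots> = (\<Sum>i\<in>I. \<Sum>m\<in>J. (cmod (U i m))\<^sup>2)"
    using fg IJ by (intro sum.cong refl sum.mono_neutral_right) (auto simp: I_def J_def)
  also have "\<dots> = (\<Sum>m\<in>J. \<Sum>i\<in>I. (cmod (U i m))\<^sup>2)" by (rule sum.swap)
  also have "\<dots> = (\<Sum>m\<in>J. \<Sum>i<d. (cmod (U i m))\<^sup>2)"
    using fg IJ by (intro sum.cong refl sum.mono_neutral_left) (auto simp: I_def J_def)
  also have "\<dots> = (\<Sum>m\<in>J. 1)"
    using unitary_mat_column_norm[OF U] IJ(4) by (intro sum.cong) auto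
  also have "\<dots> = real (card J)" by simp
  finally show ?thesis unfolding I_def J_def by linarith
qed

lemma unitary_intertwining_sorted_eq:
  fixes f g :: "nat \<Rightarrow> real"
  assumes U: "unitary_mat d U"
    and fg: "\<forall>i<d. \<forall>m<d. f i \<noteq> g m \<longrightarrow> U i m = 0"
    and f: "\<forall>i j. i \<le> j \<longrightarrow> j < d \<longrightarrow> f j \<le> f i"
    and g: "\<forall>i j. i \<le> j \<longrightarrow> j < d \<longrightarrow> g j \<le> g i"
  shows "\<forall>i<d. f i = g i"
proof -
  have "mset (map f [0..<d]) = mset (map g [0..<d])"
    by (rule multiset_eqI) (simp only: count_mset_map_upt unitary_intertwining_card_eq[OF U fg])
  then have "mset (rev (map g [0..<d])) = mset (rev (map f [0..<d]))" by simp
  then have "rev (map g [0..<d]) = rev (map f [0..<d])"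
    using sorted_rev_map_upt[OF f] sorted_rev_map_upt[OF g] by (metis properties_for_sort sorted_sort_id)
  then show ?thesis by (metis rev_is_rev_conv nth_map_upt add_0 diff_zero)
qed

lemma svd_singular_vectors:
  assumes U: "unitary_mat n U" and V: "unitary_mat n V"
    and A: "\<forall>i<n. \<forall>p<n. A i p = (\<Sum>k<n. U i k * complex_of_real (s k) * cnj (V p k))"
    and "i < n" "m < n"
  shows "(\<Sum>p<n. A i p * V p m) = U i m * of_real (s m)"
    "(\<Sum>j<n. cnj (A j i) * U j m) = of_real (s m) * V i m"
proof -
  have "(\<Sum>p<n. A i p * V p m) = (\<Sum>p<n. \<Sum>k<n. U i k * of_real (s k) * (cnj (V p k) * V p m))"
    using A \<open>i < n\<close> by (simp add: sum_distrib_right mult.assoc)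
  also have "\<dots> = (\<Sum>k<n. U i k * of_real (s k) * (\<Sum>p<n. cnj (V p k) * V p m))"
    by (subst sum.swap) (simp only: sum_distrib_left)
  also have "\<dots> = (\<Sum>k<n. if k = m then U i m * of_real (s m) else 0)"
    using unitary_mat_columns[OF V _ \<open>m < n\<close>] by (intro sum.cong) auto
  finally show "(\<Sum>p<n. A i p * V p m) = U i m * of_real (s m)"
    using \<open>m < n\<close> by simp
  have "(\<Sum>j<n. cnj (A j i) * U j m) = (\<Sum>j<n. \<Sum>k<n. of_real (s k) * V i k * (cnj (U j k) * U j m))"
    using A \<open>i < n\<close> by (simp add: cnj_sum sum_distrib_right sum_distrib_left mult_ac)
  also have "\<dots> = (\<Sum>k<n. of_real (s k) * V i k * (\<Sum>j<n. cnj (U j k) * U j m))"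
    by (subst sum.swap) (simp only: sum_distrib_left)
  also have "\<dots> = (\<Sum>k<n. if k = m then of_real (s m) * V i m else 0)"
    using unitary_mat_columns[OF U _ \<open>m < n\<close>] by (intro sum.cong) auto
  finally show "(\<Sum>j<n. cnj (A j i) * U j m) = of_real (s m) * V i m"
    using \<open>m < n\<close> by simp
qed

text \<open>From \<open>x V = U S\<close> and \<open>x\<^sup>* U = V S\<close> with \<open>x = diag c\<close> one gets \<open>diag (c\<^sup>2) U = U S\<^sup>2\<close>.\<close>
lemma has_svd_diagonal_intertwining:
  fixes c :: "nat \<Rightarrow> real"
  assumes svd: "has_svd d x s"
    and x: "\<forall>i<d. \<forall>p<d. x i p = (if i = p then complex_of_real (c i) else 0)"
  shows "\<exists>U. unitary_mat d U \<and> (\<forall>i<d. \<forall>m<d. (c i)\<^sup>2 \<noteq> (s m)\<^sup>2 \<longrightarrow> U i m = 0)"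
proof -
  obtain U V where UV: "unitary_mat d U" "unitary_mat d V"
    "\<forall>i<d. \<forall>p<d. x i p = (\<Sum>m<d. U i m * complex_of_real (s m) * cnj (V p m))"
    using svd by (auto simp: has_svd_def)
  have "U i m = 0" if im: "i < d" "m < d" and ne: "(c i)\<^sup>2 \<noteq> (s m)\<^sup>2" for i m
  proof -
    have "(\<Sum>p<d. x i p * V p m) = (\<Sum>p<d. if p = i then of_real (c i) * V i m else 0)"
      using x im by (intro sum.cong) auto
    moreover have "(\<Sum>j<d. cnj (x j i) * U j m) = (\<Sum>j<d. if j = i then of_real (c i) * U i m else 0)"
      using x im by (intro sum.cong) auto
    ultimately have xV: "of_real (c i) * V i m = U i m * of_real (s m)"
      and xU: "of_real (c i) * U i m = of_real (s m) * V i m"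
      using svd_singular_vectors[OF UV im] im by simp_all
    have "of_real ((c i)\<^sup>2) * U i m = of_real (c i) * (of_real (s m) * V i m)"
      using xU by (simp add: power2_eq_square mult.assoc)
    also have "\<dots> = of_real ((s m)\<^sup>2) * U i m"
      using xV by (simp add: power2_eq_square mult_ac)
    finally have "(of_real ((c i)\<^sup>2) - of_real ((s m)\<^sup>2)) * U i m = 0"
      by (simp add: algebra_simps)
    then show "U i m = 0" using ne by (simp del: of_real_power)
  qed
  then show ?thesis using UV(1) by blast
qed

lemma schmidt_diagonal:
  fixes c :: "nat \<Rightarrow> real"
  assumes c0: "\<forall>j. 0 \<le> c j" and c_vanish: "\<forall>j. d \<le> j \<longrightarrow> c j = 0"
    and c_mono: "\<forall>i j. i \<le> j \<longrightarrow> j < d \<longrightarrow> c j \<le> c i"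
    and x: "\<forall>i<d. \<forall>p<d. x i p = (if i = p then complex_of_real (c i) else 0)"
  shows "schmidt d x = c"
proof -
  define s where "s = schmidt d x"
  have s: "\<forall>j. 0 \<le> s j" "\<forall>j. d \<le> j \<longrightarrow> s j = 0" "\<forall>i j. i \<le> j \<longrightarrow> j < d \<longrightarrow> s j \<le> s i" "has_svd d x s"
    using schmidt_singular_values[of d x] unfolding s_def is_singular_values_iff by blast+
  obtain U where U: "unitary_mat d U" "\<forall>i<d. \<forall>m<d. (c i)\<^sup>2 \<noteq> (s m)\<^sup>2 \<longrightarrow> U i m = 0"
    using has_svd_diagonal_intertwining[OF s(4) x] by blast
  have "\<forall>i<d. (c i)\<^sup>2 = (s i)\<^sup>2"
    by (rule unitary_intertwining_sorted_eq[OF U]) (use c_mono c0 s(1,3) in \<open>auto intro: power_mono\<close>)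
  then have "s j = c j" for j
    using c0 s(1,2) c_vanish by (cases "j < d") (auto intro: power2_eq_imp_eq)
  then show ?thesis unfolding s_def by auto
qed

lemma choi_Phi_t:
  assumes "i < d" "j < d"
  shows "choi (Phi_t d t) (i, p) (j, q) =
    (if i = j \<and> p = q then 1 else 0) - of_real t * (if i = p \<and> j = q then 1 else 0)"
proof -
  have "mtrace d (mat_unit i j) = (if i = j then 1 else 0)"
    using assms by (simp add: mtrace_def mat_unit_def)
  moreover have "mat_unit i j p q = (if i = p \<and> j = q then 1 else 0)"
    by (auto simp: mat_unit_def)
  ultimately show ?thesis
    by (cases "i = j") (simp_all add: choi_def Phi_t_def)
qed

lemma qform_choi_Phi_t:
  "qform d (choi (Phi_t d t)) x =
     (\<Sum>i<d. \<Sum>p<d. cnj (x i p) * x i p) - of_real t * (cnj (\<Sum>i<d. x i i) * (\<Sum>j<d. x j j))"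
proof -
  have inner: "(\<Sum>j<d. \<Sum>q<d. cnj (x i p) * choi (Phi_t d t) (i, p) (j, q) * x j q) =
      cnj (x i p) * x i p - (if p = i then of_real t * cnj (x i i) * (\<Sum>j<d. x j j) else 0)"
    if ip: "i < d" "p < d" for i p
  proof -
    have "(\<Sum>q<d. cnj (x i p) * choi (Phi_t d t) (i, p) (j, q) * x j q) =
        (if i = j then cnj (x i p) * x j p else 0) - (if p = i then of_real t * cnj (x i i) * x j j else 0)"
      if "j < d" for j
    proof -
      have "(\<Sum>q<d. cnj (x i p) * choi (Phi_t d t) (i, p) (j, q) * x j q) =
          (\<Sum>q<d. (if q = p then cnj (x i p) * (if i = j then 1 else 0) * x j q else 0)
                - (if q = j then cnj (x i p) * of_real t * (if p = i then 1 else 0) * x j q else 0))"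
        using ip that by (intro sum.cong refl) (auto simp: choi_Phi_t algebra_simps)
      then show ?thesis using ip that by (simp add: sum_subtractf)
    qed
    then have "(\<Sum>j<d. \<Sum>q<d. cnj (x i p) * choi (Phi_t d t) (i, p) (j, q) * x j q) =
        (\<Sum>j<d. (if i = j then cnj (x i p) * x j p else 0) - (if p = i then of_real t * cnj (x i i) * x j j else 0))"
      by (intro sum.cong) auto
    also have "\<dots> = cnj (x i p) * x i p - (if p = i then of_real t * cnj (x i i) * (\<Sum>j<d. x j j) else 0)"
      using ip by (simp add: sum_subtractf sum_distrib_left)
    finally show ?thesis .
  qed
  have "qform d (choi (Phi_t d t)) x =
      (\<Sum>i<d. \<Sum>p<d. cnj (x i p) * x i p) - (\<Sum>i<d. \<Sum>p<d. if p = i then of_real t * cnj (x i i) * (\<Sum>j<d. x j j) else 0)"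
    unfolding qform_def by (simp add: inner sum_subtractf)
  also have "(\<Sum>i<d. \<Sum>p<d. if p = i then of_real t * cnj (x i i) * (\<Sum>j<d. x j j) else 0) =
      of_real t * (cnj (\<Sum>i<d. x i i) * (\<Sum>j<d. x j j))"
    by (simp add: cnj_sum sum_distrib_left sum_distrib_right mult.assoc) (rule sum.swap)
  finally show ?thesis .
qed

lemma Re_qform_choi_Phi_t:
  "Re (qform d (choi (Phi_t d t)) x) = (\<Sum>i<d. \<Sum>p<d. (cmod (x i p))\<^sup>2) - t * (cmod (\<Sum>i<d. x i i))\<^sup>2"
proof -
  have norm_sq: "cnj z * z = of_real ((cmod z)\<^sup>2)" for z :: complex
    by (metis complex_norm_square mult.commute)
  show ?thesis
    unfolding qform_choi_Phi_t norm_sq by (simp add: of_real_sum [symmetric] del: of_real_sum)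
qed

lemma hermitian_preserving_Phi_t: "hermitian_preserving d (Phi_t d t)"
  unfolding hermitian_preserving_def hermitian_mat_def
proof (intro allI impI)
  fix X :: cmat and i j :: nat
  assume X: "\<forall>i<d. \<forall>j<d. X j i = cnj (X i j)" and ij: "i < d" "j < d"
  have diag: "cnj (X m m) = X m m" if "m < d" for m
  proof -
    have "X m m = cnj (X m m)" using X that by blast
    then show ?thesis by (metis complex_cnj_cnj)
  qed
  show "Phi_t d t X j i = cnj (Phi_t d t X i j)"
  proof (cases "i = j")
    case True
    have "cnj (mtrace d X) = mtrace d X"
      unfolding mtrace_def cnj_sum using diag by (intro sum.cong) auto
    moreover have "Phi_t d t X i i = mtrace d X - of_real t * X i i"
      by (simp add: Phi_t_def)
    ultimately show ?thesis
      using True diag[OF ij(1)] by simp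
  next
    case False
    then have "Phi_t d t X j i = - of_real t * X j i" "Phi_t d t X i j = - of_real t * X i j"
      by (simp_all add: Phi_t_def)
    moreover have "X j i = cnj (X i j)" using X ij by blast
    ultimately show ?thesis by simp
  qed
qed

section \<open>The optimisation over admissible Schmidt profiles\<close>

lemma admissible_profile_poly_ineq:
  fixes k S u \<theta> :: real
  assumes "1 \<le> k" "0 \<le> \<theta>" "\<theta> < 1" "0 \<le> S" "0 \<le> u" "k * u \<le> \<theta> * S"
  shows "k * (S + u)\<^sup>2 * (k + \<theta>\<^sup>2) \<le> (k + \<theta>)\<^sup>2 * (S\<^sup>2 + k * u\<^sup>2)"
proof -
  have factor: "(k + \<theta>)\<^sup>2 * (S\<^sup>2 + k * u\<^sup>2) - k * (S + u)\<^sup>2 * (k + \<theta>\<^sup>2)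
      = (\<theta> * S - k * u) * ((2 * k + \<theta> - k * \<theta>) * S - (k - 1 + 2 * \<theta>) * (k * u))"
    by (simp add: power2_eq_square algebra_simps)
  have "(k - 1 + 2 * \<theta>) * (k * u) \<le> (k - 1 + 2 * \<theta>) * (\<theta> * S)"
    using assms by (intro mult_left_mono) auto
  moreover have "(2 * k + \<theta> - k * \<theta>) * S - (k - 1 + 2 * \<theta>) * (\<theta> * S) = 2 * S * ((k + \<theta>) * (1 - \<theta>))"
    by (simp add: algebra_simps)
  moreover have "0 \<le> 2 * S * ((k + \<theta>) * (1 - \<theta>))"
    using assms by simp
  ultimately have "0 \<le> (2 * k + \<theta> - k * \<theta>) * S - (k - 1 + 2 * \<theta>) * (k * u)"
    by linarith
  moreover have "0 \<le> \<theta> * S - k * u"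
    using assms by simp
  ultimately have "0 \<le> (\<theta> * S - k * u) * ((2 * k + \<theta> - k * \<theta>) * S - (k - 1 + 2 * \<theta>) * (k * u))"
    by simp
  then show ?thesis
    using factor by linarith
qed

lemma admissible_profile_sum_le:
  fixes s :: "nat \<Rightarrow> real"
  assumes k: "1 \<le> k" and \<theta>: "0 \<le> \<theta>" "\<theta> < 1" and s_nonneg: "\<forall>j. 0 \<le> s j"
    and s_norm: "(\<Sum>j<Suc k. (s j)\<^sup>2) = 1"
    and s_last: "real k * s k \<le> \<theta> * (\<Sum>j<k. s j)"
  shows "(\<Sum>j<Suc k. s j)\<^sup>2 \<le> (real k + \<theta>)\<^sup>2 / (real k + \<theta>\<^sup>2)"
proof -
  define S where "S = (\<Sum>j<k. s j)"
  define Q where "Q = (\<Sum>j<k. (s j)\<^sup>2)"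
  have "S\<^sup>2 \<le> real k * Q"
    using sum_squared_le_sum_of_squares[of s "{..<k}"] by (simp add: S_def Q_def mult.commute)
  have "0 \<le> S" using s_nonneg by (simp add: S_def sum_nonneg)
  then have "real k * (S + s k)\<^sup>2 * (real k + \<theta>\<^sup>2) \<le> (real k + \<theta>)\<^sup>2 * (S\<^sup>2 + real k * (s k)\<^sup>2)"
    using k \<theta> s_nonneg s_last by (intro admissible_profile_poly_ineq) (auto simp: S_def)
  also have "\<dots> \<le> (real k + \<theta>)\<^sup>2 * (real k * Q + real k * (s k)\<^sup>2)"
    using \<open>S\<^sup>2 \<le> real k * Q\<close> by (intro mult_left_mono) auto
  also have "\<dots> = real k * (real k + \<theta>)\<^sup>2 * (Q + (s k)\<^sup>2)"
    by (simp add: algebra_simps)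
  also have "Q + (s k)\<^sup>2 = 1"
    using s_norm by (simp add: Q_def)
  finally have "(S + s k)\<^sup>2 * (real k + \<theta>\<^sup>2) \<le> (real k + \<theta>)\<^sup>2"
    using k by (simp add: mult.assoc)
  moreover have "0 < real k + \<theta>\<^sup>2"
    using k by (simp add: add_pos_nonneg)
  ultimately show ?thesis
    by (simp add: S_def field_simps)
qed

lemma sum_lessThan_eq_of_vanishing:
  fixes f :: "nat \<Rightarrow> 'a::comm_monoid_add"
  assumes "k \<le> d" "\<forall>j. Suc k \<le> j \<longrightarrow> f j = 0" "\<forall>j. d \<le> j \<longrightarrow> f j = 0"
  shows "(\<Sum>j<d. f j) = (\<Sum>j<Suc k. f j)"
proof (cases "k < d")
  case True
  then show ?thesis
    using assms(2) by (intro sum.mono_neutral_right) auto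
next
  case False
  then show ?thesis
    using assms(1,3) by (intro sum.mono_neutral_left) auto
qed

lemma alpha_floor_ceiling:
  assumes "1 \<le> \<alpha>"
  defines "k \<equiv> nat \<lfloor>\<alpha>\<rfloor>"
  defines "\<theta> \<equiv> \<alpha> - real k"
  shows "1 \<le> k" "0 \<le> \<theta>" "\<theta> < 1" "nat \<lceil>\<alpha>\<rceil> = (if \<theta> = 0 then k else Suc k)"
proof -
  have floor: "real k = of_int \<lfloor>\<alpha>\<rfloor>"
    using assms(1) by (simp add: k_def)
  show "1 \<le> k" using assms(1) by (simp add: k_def le_nat_iff)
  show "0 \<le> \<theta>" "\<theta> < 1"
    unfolding \<theta>_def floor using real_of_int_floor_add_one_gt[of \<alpha>] by linarith+
  show "nat \<lceil>\<alpha>\<rceil> = (if \<theta> = 0 then k else Suc k)"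
  proof (cases "\<theta> = 0")
    case True
    then have "\<alpha> = of_int (int k)" by (simp add: \<theta>_def)
    then show ?thesis using True by (metis ceiling_of_int nat_int)
  next
    case False
    have "\<lceil>\<alpha>\<rceil> = int k + 1"
      by (rule ceiling_unique) (use False \<open>0 \<le> \<theta>\<close> \<open>\<theta> < 1\<close> in \<open>simp_all add: \<theta>_def\<close>)
    then show ?thesis using False by simp
  qed
qed

lemma admissible_iff:
  assumes "1 \<le> \<alpha>"
  defines "k \<equiv> nat \<lfloor>\<alpha>\<rfloor>"
  defines "\<theta> \<equiv> \<alpha> - real k"
  shows "admissible d \<alpha> a \<longleftrightarrow> Defs.unit_vec d a \<and>
    (\<forall>j. (if \<theta> = 0 then k else Suc k) \<le> j \<longrightarrow> schmidt d a j = 0) \<and>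
    (0 < \<theta> \<longrightarrow> schmidt d a k \<le> \<theta> / real k * (\<Sum>j<k. schmidt d a j))"
  using alpha_floor_ceiling(4)[OF assms(1)]
  unfolding admissible_def Let_def k_def[symmetric] \<theta>_def[symmetric] by simp

lemma admissible_schmidt_profile:
  assumes "1 \<le> \<alpha>" "admissible d \<alpha> x"
  defines "k \<equiv> nat \<lfloor>\<alpha>\<rfloor>"
  defines "\<theta> \<equiv> \<alpha> - real k"
  shows "Defs.unit_vec d x" "\<forall>j. Suc k \<le> j \<longrightarrow> schmidt d x j = 0"
    "real k * schmidt d x k \<le> \<theta> * (\<Sum>j<k. schmidt d x j)"
proof -
  note k\<theta> = alpha_floor_ceiling[OF assms(1), folded k_def \<theta>_def]
  note adm = assms(2)[unfolded admissible_iff[OF assms(1), folded k_def \<theta>_def]]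
  show "Defs.unit_vec d x" "\<forall>j. Suc k \<le> j \<longrightarrow> schmidt d x j = 0"
    using adm by (auto split: if_splits)
  show "real k * schmidt d x k \<le> \<theta> * (\<Sum>j<k. schmidt d x j)"
  proof (cases "\<theta> = 0")
    case True
    then show ?thesis using adm by simp
  next
    case False
    then show ?thesis using adm k\<theta>(1,2) by (simp add: field_simps)
  qed
qed

lemma Re_qform_choi_Phi_t_lower_bound:
  assumes "1 \<le> \<alpha>" "\<alpha> \<le> real d" "0 \<le> t" "x \<in> V_set d \<alpha>"
  defines "k \<equiv> nat \<lfloor>\<alpha>\<rfloor>"
  defines "\<theta> \<equiv> \<alpha> - real k"
  shows "1 - t * (real k + \<theta>)\<^sup>2 / (real k + \<theta>\<^sup>2) \<le> Re (qform d (choi (Phi_t d t)) x)"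
proof -
  note k\<theta> = alpha_floor_ceiling[OF assms(1), folded k_def \<theta>_def]
  have "k \<le> d" using k\<theta>(2) assms(2) by (simp add: \<theta>_def)
  define s where "s = schmidt d x"
  have s: "\<forall>j. 0 \<le> s j" "\<forall>j. d \<le> j \<longrightarrow> s j = 0" "has_svd d x s"
    using schmidt_singular_values[of d x] unfolding s_def is_singular_values_iff by blast+
  have "admissible d \<alpha> x" using assms(4) by (simp add: V_set_def)
  note x = admissible_schmidt_profile[OF assms(1) this, folded k_def \<theta>_def s_def]
  have sums: "(\<Sum>j<d. f j) = (\<Sum>j<Suc k. f j)" if "\<forall>j. s j = 0 \<longrightarrow> f j = 0" for f :: "nat \<Rightarrow> real"
    using \<open>k \<le> d\<close> x(2) s(2) that by (intro sum_lessThan_eq_of_vanishing) auto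
  have "(\<Sum>j<Suc k. (s j)\<^sup>2) = 1"
    using has_svd_frobenius[OF s(3)] x(1) sums[of "\<lambda>j. (s j)\<^sup>2"] by (simp add: Defs.unit_vec_def)
  then have "(\<Sum>j<d. s j)\<^sup>2 \<le> (real k + \<theta>)\<^sup>2 / (real k + \<theta>\<^sup>2)"
    using admissible_profile_sum_le[OF k\<theta>(1-3) s(1)] x(3) sums[of s] by simp
  moreover have "(cmod (\<Sum>i<d. x i i))\<^sup>2 \<le> (\<Sum>j<d. s j)\<^sup>2"
    using has_svd_trace_le[OF s(3,1)] by (simp add: power_mono)
  ultimately have "t * (cmod (\<Sum>i<d. x i i))\<^sup>2 \<le> t * ((real k + \<theta>)\<^sup>2 / (real k + \<theta>\<^sup>2))"
    using assms(3) by (intro mult_left_mono) auto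
  then show ?thesis
    using x(1) unfolding Re_qform_choi_Phi_t Defs.unit_vec_def by simp
qed

section \<open>The extremal vector\<close>

definition extremal_profile :: "nat \<Rightarrow> real \<Rightarrow> nat \<Rightarrow> real" where
  "extremal_profile k \<theta> j =
     (if j < k then 1 / sqrt (real k + \<theta>\<^sup>2) else if j = k then \<theta> / sqrt (real k + \<theta>\<^sup>2) else 0)"

lemma extremal_profile_nonneg: "0 \<le> \<theta> \<Longrightarrow> 0 \<le> extremal_profile k \<theta> j"
  by (simp add: extremal_profile_def)

lemma extremal_profile_antimono:
  assumes "0 \<le> \<theta>" "\<theta> \<le> 1" "i \<le> j"
  shows "extremal_profile k \<theta> j \<le> extremal_profile k \<theta> i"
proof -
  have "\<theta> / sqrt (real k + \<theta>\<^sup>2) \<le> 1 / sqrt (real k + \<theta>\<^sup>2)"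
    using assms(2) by (simp add: divide_right_mono)
  then show ?thesis
    using assms by (auto simp: extremal_profile_def)
qed

lemma extremal_profile_vanishes:
  "(if \<theta> = 0 then k else Suc k) \<le> j \<Longrightarrow> extremal_profile k \<theta> j = 0"
  by (auto simp: extremal_profile_def split: if_splits)

lemma extremal_profile_sums:
  assumes "1 \<le> k"
  shows "(\<Sum>j<Suc k. extremal_profile k \<theta> j) = (real k + \<theta>) / sqrt (real k + \<theta>\<^sup>2)"
    "(\<Sum>j<Suc k. (extremal_profile k \<theta> j)\<^sup>2) = 1"
proof -
  have pos: "0 < real k + \<theta>\<^sup>2" using assms by (simp add: add_pos_nonneg)
  show "(\<Sum>j<Suc k. extremal_profile k \<theta> j) = (real k + \<theta>) / sqrt (real k + \<theta>\<^sup>2)"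
    by (simp add: extremal_profile_def add_divide_distrib)
  show "(\<Sum>j<Suc k. (extremal_profile k \<theta> j)\<^sup>2) = 1"
    using pos by (simp add: extremal_profile_def power_divide add_divide_distrib [symmetric])
qed

lemma diagonal_norm_trace:
  fixes c :: "nat \<Rightarrow> real"
  assumes c: "\<forall>j. 0 \<le> c j"
    and x: "\<forall>i<d. \<forall>p<d. x i p = (if i = p then complex_of_real (c i) else 0)"
  shows "(\<Sum>i<d. \<Sum>p<d. (cmod (x i p))\<^sup>2) = (\<Sum>i<d. (c i)\<^sup>2)" "cmod (\<Sum>i<d. x i i) = (\<Sum>i<d. c i)"
proof -
  have "(\<Sum>p<d. (cmod (x i p))\<^sup>2) = (c i)\<^sup>2" if "i < d" for i
  proof -
    have "(\<Sum>p<d. (cmod (x i p))\<^sup>2) = (\<Sum>p<d. if p = i then (c i)\<^sup>2 else 0)"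
      using that x c by (intro sum.cong) auto
    then show ?thesis using that by simp
  qed
  then show "(\<Sum>i<d. \<Sum>p<d. (cmod (x i p))\<^sup>2) = (\<Sum>i<d. (c i)\<^sup>2)" by simp
  have "(\<Sum>i<d. x i i) = of_real (\<Sum>i<d. c i)" using x by (simp add: of_real_sum)
  moreover have "0 \<le> (\<Sum>i<d. c i)" using c by (simp add: sum_nonneg)
  ultimately show "cmod (\<Sum>i<d. x i i) = (\<Sum>i<d. c i)" by (metis norm_of_real abs_of_nonneg)
qed

lemma extremal_vector:
  assumes "1 \<le> \<alpha>" "\<alpha> \<le> real d"
  defines "k \<equiv> nat \<lfloor>\<alpha>\<rfloor>"
  defines "\<theta> \<equiv> \<alpha> - real k"
  assumes x: "\<forall>i<d. \<forall>p<d. x i p = (if i = p then complex_of_real (extremal_profile k \<theta> i) else 0)"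
  shows "schmidt d x = extremal_profile k \<theta>" "x \<in> V_set d \<alpha>"
    "Re (qform d (choi (Phi_t d t)) x) = 1 - t * (real k + \<theta>)\<^sup>2 / (real k + \<theta>\<^sup>2)"
proof -
  note k\<theta> = alpha_floor_ceiling[OF assms(1), folded k_def \<theta>_def]
  define c where "c = extremal_profile k \<theta>"
  have c_nonneg: "\<forall>j. 0 \<le> c j"
    using k\<theta> by (simp add: c_def extremal_profile_nonneg)
  have c_vanishes: "\<forall>j. (if \<theta> = 0 then k else Suc k) \<le> j \<longrightarrow> c j = 0"
    by (simp add: c_def extremal_profile_vanishes)
  have "real k + \<theta> \<le> real d" using assms(2) by (simp add: \<theta>_def)
  then have "(if \<theta> = 0 then k else Suc k) \<le> d"
    using k\<theta>(2) by auto
  then have c_vanishes_d: "\<forall>j. d \<le> j \<longrightarrow> c j = 0"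
    using c_vanishes by auto
  have sch: "schmidt d x = c"
    using x k\<theta> c_vanishes_d unfolding c_def
    by (intro schmidt_diagonal) (auto intro: extremal_profile_nonneg extremal_profile_antimono)
  then show "schmidt d x = extremal_profile k \<theta>" by (simp add: c_def)
  have sums: "(\<Sum>j<d. f j) = (\<Sum>j<Suc k. f j)" if "\<forall>j. c j = 0 \<longrightarrow> f j = 0" for f :: "nat \<Rightarrow> real"
    using \<open>(if \<theta> = 0 then k else Suc k) \<le> d\<close> c_vanishes c_vanishes_d that
    by (intro sum_lessThan_eq_of_vanishing) (auto split: if_splits)
  note diag = diagonal_norm_trace[OF c_nonneg x[folded c_def]]
  have "(\<Sum>j<d. (c j)\<^sup>2) = 1"
    using sums[of "\<lambda>j. (c j)\<^sup>2"] extremal_profile_sums(2)[OF k\<theta>(1), of \<theta>] by (simp add: c_def)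
  then have unit: "Defs.unit_vec d x"
    unfolding Defs.unit_vec_def diag .
  have "0 < \<theta> \<longrightarrow> c k \<le> \<theta> / real k * (\<Sum>j<k. c j)"
    using k\<theta>(1) by (simp add: c_def extremal_profile_def)
  then show "x \<in> V_set d \<alpha>"
    unfolding V_set_def admissible_iff[OF assms(1), folded k_def \<theta>_def]
    using unit sch c_vanishes by simp
  have "(\<Sum>i<d. (c i)) = (real k + \<theta>) / sqrt (real k + \<theta>\<^sup>2)"
    using sums[of c] extremal_profile_sums(1)[OF k\<theta>(1), of \<theta>] by (simp add: c_def)
  moreover have "0 < real k + \<theta>\<^sup>2" using k\<theta>(1) by (simp add: add_pos_nonneg)
  ultimately show "Re (qform d (choi (Phi_t d t)) x) = 1 - t * (real k + \<theta>)\<^sup>2 / (real k + \<theta>\<^sup>2)"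
    using unit unfolding Re_qform_choi_Phi_t diag Defs.unit_vec_def by (simp add: power_divide)
qed

lemma lambda_alpha_attained:
  assumes "x0 \<in> V_set d \<alpha>" "\<forall>x\<in>V_set d \<alpha>. Re (qform d W x0) \<le> Re (qform d W x)"
  shows "lambda_alpha d \<alpha> W = Re (qform d W x0)"
  unfolding lambda_alpha_def using assms by (intro cInf_eq_minimum) auto

lemma in_P_iff_attained_min:
  assumes "hermitian_preserving d \<Phi>" "x0 \<in> V_set d \<alpha>"
    "\<forall>x\<in>V_set d \<alpha>. Re (qform d (choi \<Phi>) x0) \<le> Re (qform d (choi \<Phi>) x)"
  shows "in_P d \<alpha> \<Phi> \<longleftrightarrow> 0 \<le> Re (qform d (choi \<Phi>) x0)"
  using assms unfolding in_P_def by (meson order_trans)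

theorem theorem3p16:
  fixes d :: nat and t \<alpha> :: real
  assumes "2 \<le> d" and "0 \<le> t" and "1 \<le> \<alpha>" and "\<alpha> \<le> real d"
  defines "k \<equiv> nat \<lfloor>\<alpha>\<rfloor>"
  defines "\<theta> \<equiv> \<alpha> - real k"
  defines "tstar \<equiv> (real k + \<theta>\<^sup>2) / (real k + \<theta>)\<^sup>2"
  shows "(in_P d \<alpha> (Phi_t d t) \<longleftrightarrow> t \<le> tstar)
    \<and> lambda_alpha d \<alpha> (choi (Phi_t d t)) = 1 - t * (real k + \<theta>)\<^sup>2 / (real k + \<theta>\<^sup>2)
    \<and> (t > tstar \<longrightarrow> (\<exists>x\<in>V_set d \<alpha>. Re (qform d (choi (Phi_t d t)) x) < 0))
    \<and> (t > tstar \<longrightarrow> real k < \<alpha> \<longrightarrow> \<alpha> < real k + 1 \<longrightarrow>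
        (\<exists>x\<in>V_set d \<alpha>. Re (qform d (choi (Phi_t d t)) x) < 0 \<and>
           (\<forall>j. schmidt d x j =
              (if j < k then 1 / sqrt (real k + \<theta>\<^sup>2)
               else if j = k then \<theta> / sqrt (real k + \<theta>\<^sup>2) else 0))))
    \<and> (t > tstar \<longrightarrow> \<alpha> = real d \<longrightarrow>
        omega d \<in> V_set d \<alpha> \<and> Re (qform d (choi (Phi_t d t)) (omega d)) < 0)"
proof -
  define L where "L = 1 - t * (real k + \<theta>)\<^sup>2 / (real k + \<theta>\<^sup>2)"
  have lower: "\<forall>x\<in>V_set d \<alpha>. L \<le> Re (qform d (choi (Phi_t d t)) x)"
    using Re_qform_choi_Phi_t_lower_bound[OF assms(3,4,2)] by (simp add: L_def k_def \<theta>_def)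
  define x0 where "x0 = cmat_diag (\<lambda>j. complex_of_real (extremal_profile k \<theta> j))"
  have x0: "schmidt d x0 = extremal_profile k \<theta>" "x0 \<in> V_set d \<alpha>"
    "Re (qform d (choi (Phi_t d t)) x0) = L"
    using extremal_vector(1,2)[OF assms(3,4), where x = x0] extremal_vector(3)[OF assms(3,4), where x = x0 and t = t]
    by (simp_all add: x0_def cmat_diag_def L_def k_def \<theta>_def)
  have omega: "omega d \<in> V_set d \<alpha> \<and> Re (qform d (choi (Phi_t d t)) (omega d)) = L" if "\<alpha> = real d"
  proof -
    have "k = d" "\<theta> = 0" using that by (simp_all add: k_def \<theta>_def)
    then show ?thesis
      using extremal_vector(2)[OF assms(3,4), where x = "omega d"]
        extremal_vector(3)[OF assms(3,4), where x = "omega d" and t = t]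
      by (simp add: omega_def extremal_profile_def L_def k_def \<theta>_def)
  qed
  have "t \<le> tstar \<longleftrightarrow> 0 \<le> L"
    using alpha_floor_ceiling(1,2)[OF assms(3), folded k_def \<theta>_def]
    by (simp add: tstar_def L_def field_simps add_pos_nonneg)
  then have "in_P d \<alpha> (Phi_t d t) \<longleftrightarrow> t \<le> tstar" "tstar < t \<Longrightarrow> L < 0"
    using in_P_iff_attained_min[OF hermitian_preserving_Phi_t x0(2)] x0(3) lower by auto
  moreover have "lambda_alpha d \<alpha> (choi (Phi_t d t)) = L"
    using lambda_alpha_attained[OF x0(2)] x0(3) lower by simp
  ultimately show ?thesis
    unfolding L_def[symmetric] using x0 omega by (auto simp: extremal_profile_def intro!: bexI[of _ x0])
qed

end
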